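(* Let $\mathcal{B}$ be a real Banach space whose dual space $\mathcal{B}^*$ is smooth, let $\nu_j\in\mathcal{B}^*$, $j\in\mathbb{N}_m$, be linearly independent and let $\mathbf{y}\in\mathbb{R}^m$. Then $\hat f\in\mathcal{B}$ is a solution of the minimum norm interpolation problem with data $\mathbf{y}$ if and only if $\hat f\in\mathcal{M}_{\mathbf{y}}$ and there exist $c_j\in\mathbb{R}$, $j\in\mathbb{N}_m$, such that $$\hat f=\rho\,\mathcal{G}^*\Big(\sum_{j\in\mathbb{N}_m}c_j\nu_j\Big),\qquad \rho:=\Big\|\sum_{j\in\mathbb{N}_m}c_j\nu_j\Big\|_{\mathcal{B}^*},$$ where $\hat f$ is identified with its canonical image in $\mathcal{B}^{**}$.
   Context: $\mathcal{B}$ is a real Banach space with dual $\mathcal{B}^*$ and pairing $\langle\nu,f\rangle_{\mathcal{B}}:=\nu(f)$; $\mathbb{N}_m:=\{1,\dots,m\}$; $\mathcal{L}(f):=[\langle\nu_j,f\rangle_{\mathcal{B}}:j\in\mathbb{N}_m]$, $\mathcal{M}_{\mathbf{y}}:=\{f\in\mathcal{B}:\mathcal{L}(f)=\mathbf{y}\}$; a solution of the minimum norm interpolation problem with data $\mathbf{y}$ is an $\hat f\in\mathcal{M}_{\mathbf{y}}$ with $\|\hat f\|_{\mathcal{B}}=\inf\{\|f\|_{\mathcal{B}}:f\in\mathcal{M}_{\mathbf{y}}\}$. A normed space $X$ is smooth if its norm is Gâteaux differentiable at every $x\neq0$, i.e. $\lim_{t\to0}(\|x+th\|-\|x\|)/t$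 exists for all $h$; the Gâteaux derivative is the functional in $X^*$ given by this limit. $\mathcal{G}^*(\nu)\in\mathcal{B}^{**}$ denotes the Gâteaux derivative of $\|\cdot\|_{\mathcal{B}^*}$ at $\nu\neq0$, and $\mathcal{G}^*(0):=0$. *)

theory Defs
  imports "HOL-Analysis.Analysis"
begin

definition norm_dq :: "'b::real_normed_vector \<Rightarrow> 'b \<Rightarrow> real \<Rightarrow> real" where
  "norm_dq x h t = (norm (x + t *\<^sub>R h) - norm x) / t"

definition smooth_space :: "'b::real_normed_vector itself \<Rightarrow> bool" where
  "smooth_space _ \<longleftrightarrow>
     (\<forall>x::'b. x \<noteq> 0 \<longrightarrow> (\<forall>h. \<exists>l. (norm_dq x h \<longlongrightarrow> l) (at (0::real))))"

definition gateaux_norm :: "'b::real_normed_vector \<Rightarrow> 'b \<Rightarrow> real" where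
  "gateaux_norm x h = (if x = 0 then 0 else Lim (at (0::real)) (norm_dq x h))"

definition lin_indep_family :: "(nat \<Rightarrow> 'b::real_vector) \<Rightarrow> nat \<Rightarrow> bool" where
  "lin_indep_family \<nu> m \<longleftrightarrow>
     (\<forall>c. (\<Sum>j=1..m. c j *\<^sub>R \<nu> j) = 0 \<longrightarrow> (\<forall>j\<in>{1..m}. c j = 0))"

definition interp_set :: "(nat \<Rightarrow> ('a::real_normed_vector \<Rightarrow>\<^sub>L real)) \<Rightarrow> nat \<Rightarrow> (nat \<Rightarrow> real) \<Rightarrow> 'a set" where
  "interp_set \<nu> m y = {f. \<forall>j\<in>{1..m}. blinfun_apply (\<nu> j) f = y j}"

definition min_norm_interp_sol ::
  "(nat \<Rightarrow> ('a::real_normed_vector \<Rightarrow>\<^sub>L real)) \<Rightarrow> nat \<Rightarrow> (nat \<Rightarrow> real) \<Rightarrow> 'a \<Rightarrow> bool" where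
  "min_norm_interp_sol \<nu> m y f \<longleftrightarrow>
     f \<in> interp_set \<nu> m y \<and> norm f = Inf (norm ` interp_set \<nu> m y)"

end

theory Submission
  imports Defs
begin

text \<open>If f has minimal norm in \<open>f + N\<close>, N the common kernel of the \<open>\<nu>\<^sub>j\<close>, then the
  distance to N is a sublinear functional that equals \<open>\<parallel>f\<parallel>\<close> at f. Hahn--Banach (proved below
  from Zorn's lemma) turns it into a functional \<open>\<phi>\<close> of norm one with \<open>\<phi> f = \<parallel>f\<parallel>\<close> that
  vanishes on N, hence \<open>\<phi> = \<Sum> c\<^sub>j \<nu>\<^sub>j\<close>. On the dual, evaluation at f divided by \<open>\<parallel>f\<parallel>\<close> is a
  subgradient of the norm at \<open>\<parallel>f\<parallel> \<phi>\<close>; since the dual norm is smooth the subgradient is the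
  Gateaux derivative, which is the claimed representation.
  Conversely, if evaluation at f equals \<open>\<parallel>S\<parallel> \<G>\<^sup>*(S)\<close> with \<open>S = \<Sum> c\<^sub>j \<nu>\<^sub>j\<close>, then testing against a
  norming functional of f gives \<open>\<parallel>f\<parallel> \<le> \<parallel>S\<parallel>\<close>, while \<open>S f = \<parallel>S\<parallel>\<^sup>2\<close> and S is constant on
  the interpolation set, so \<open>\<parallel>S\<parallel> \<le> \<parallel>g\<parallel>\<close> for every interpolant g.\<close>

section \<open>Hahn--Banach for sublinear functionals\<close>

definition sublinear :: "('a::real_vector \<Rightarrow> real) \<Rightarrow> bool" where
  "sublinear p \<longleftrightarrow>
     (\<forall>x y. p (x + y) \<le> p x + p y) \<and> (\<forall>c x. 0 \<le> c \<longrightarrow> p (c *\<^sub>R x) = c * p x)"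

lemma sublinearD:
  assumes "sublinear p"
  shows sublinear_add: "p (x + y) \<le> p x + p y"
    and sublinear_scaleR: "0 \<le> c \<Longrightarrow> p (c *\<^sub>R x) = c * p x"
  using assms unfolding sublinear_def by auto

lemma sublinear_zero: "sublinear p \<Longrightarrow> p 0 = 0"
  using sublinear_scaleR[of p 0 0] by simp

lemma sublinear_uminus_ge: "sublinear p \<Longrightarrow> - p x \<le> p (- x)"
  using sublinear_add[of p x "- x"] sublinear_zero[of p] by simp

text \<open>Partial linear functionals are handled through their graphs, so that the union of a chain
  is again one and Zorn's lemma applies directly.\<close>
definition dominated_linear_graph :: "('a::real_vector \<Rightarrow> real) \<Rightarrow> ('a \<times> real) set \<Rightarrow> bool" where
  "dominated_linear_graph p G \<longleftrightarrow> single_valued G \<and>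
     (\<forall>x a y b. (x, a) \<in> G \<longrightarrow> (y, b) \<in> G \<longrightarrow> (x + y, a + b) \<in> G) \<and>
     (\<forall>x a c. (x, a) \<in> G \<longrightarrow> (c *\<^sub>R x, c * a) \<in> G) \<and>
     (\<forall>x a. (x, a) \<in> G \<longrightarrow> a \<le> p x)"

lemma dominated_linear_graphD:
  assumes "dominated_linear_graph p G"
  shows dominated_linear_graph_unique: "(x, a) \<in> G \<Longrightarrow> (x, b) \<in> G \<Longrightarrow> a = b"
    and dominated_linear_graph_add: "(x, a) \<in> G \<Longrightarrow> (y, b) \<in> G \<Longrightarrow> (x + y, a + b) \<in> G"
    and dominated_linear_graph_scaleR: "(x, a) \<in> G \<Longrightarrow> (c *\<^sub>R x, c * a) \<in> G"
    and dominated_linear_graph_le: "(x, a) \<in> G \<Longrightarrow> a \<le> p x"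
  using assms unfolding dominated_linear_graph_def single_valued_def by blast+

lemma dominated_linear_graph_Union_chain:
  assumes "chain\<^sub>\<subseteq> C" "\<And>G. G \<in> C \<Longrightarrow> dominated_linear_graph p G"
  shows "dominated_linear_graph p (\<Union>C)"
proof -
  have common: "\<exists>G\<in>C. dominated_linear_graph p G \<and> u \<in> G \<and> v \<in> G"
    if "u \<in> \<Union>C" "v \<in> \<Union>C" for u v
    using that assms unfolding chain_subset_def by blast
  show ?thesis
    unfolding dominated_linear_graph_def single_valued_def
  proof (intro conjI allI impI)
    show "a = b" if "(x, a) \<in> \<Union>C" "(x, b) \<in> \<Union>C" for x a b
      using common[OF that] dominated_linear_graph_unique by blast
    show "(x + y, a + b) \<in> \<Union>C" if "(x, a) \<in> \<Union>C" "(y, b) \<in> \<Union>C" for x a y b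
      using common[OF that] dominated_linear_graph_add by blast
    show "(c *\<^sub>R x, c * a) \<in> \<Union>C" if "(x, a) \<in> \<Union>C" for x a c
      using common[OF that that] dominated_linear_graph_scaleR by blast
    show "a \<le> p x" if "(x, a) \<in> \<Union>C" for x a
      using common[OF that that] dominated_linear_graph_le by blast
  qed
qed

lemma dominated_extension_value_exists:
  assumes "sublinear p" "dominated_linear_graph p G" "G \<noteq> {}"
  shows "\<exists>a. \<forall>s b. (s, b) \<in> G \<longrightarrow> b - p (s - z) \<le> a \<and> a \<le> p (s + z) - b"
proof -
  define S where "S = {b - p (s - z) | s b. (s, b) \<in> G}"
  have gap: "b - p (s - z) \<le> p (s' + z) - b'" if "(s, b) \<in> G" "(s', b') \<in> G" for s b s' b'
  proof -
    have "b + b' \<le> p (s + s')"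
      using assms(2) that by (blast intro: dominated_linear_graph_le dominated_linear_graph_add)
    also have "\<dots> \<le> p (s - z) + p (s' + z)"
      using sublinear_add[OF assms(1), of "s - z" "s' + z"] by simp
    finally show ?thesis by simp
  qed
  obtain s0 b0 where "(s0, b0) \<in> G" using assms(3) by auto
  then have "S \<noteq> {}" "bdd_above S"
    using gap unfolding S_def bdd_above_def by blast+
  then show ?thesis
    by (intro exI[of _ "Sup S"] allI impI conjI cSup_upper cSup_least)
       (auto simp: S_def intro: gap)
qed

text \<open>The bounds on a are exactly what keeps the extended functional below p after rescaling
  by \<open>\<bar>t\<bar>\<close>.\<close>
lemma dominated_extension_le:
  assumes "sublinear p" "dominated_linear_graph p G"
    and a: "\<And>s b. (s, b) \<in> G \<Longrightarrow> b - p (s - z) \<le> a \<and> a \<le> p (s + z) - b"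
    and "(s, b) \<in> G"
  shows "b + t * a \<le> p (s + t *\<^sub>R z)"
proof (cases t "0::real" rule: linorder_cases)
  case equal
  then show ?thesis using assms(2,4) dominated_linear_graph_le by simp
next
  case greater
  have "(inverse t *\<^sub>R s, inverse t * b) \<in> G"
    using assms(2,4) by (rule dominated_linear_graph_scaleR)
  then have "inverse t * b + a \<le> p (inverse t *\<^sub>R s + z)"
    using a by fastforce
  then have "t * (inverse t * b + a) \<le> t * p (inverse t *\<^sub>R s + z)"
    using greater by (intro mult_left_mono) auto
  also have "\<dots> = p (t *\<^sub>R (inverse t *\<^sub>R s + z))"
    using sublinear_scaleR[OF assms(1), of t] greater by simp
  also have "t *\<^sub>R (inverse t *\<^sub>R s + z) = s + t *\<^sub>R z"
    using greater by (simp add: scaleR_add_right)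
  finally show ?thesis using greater by (simp add: algebra_simps)
next
  case less
  have "(inverse (- t) *\<^sub>R s, inverse (- t) * b) \<in> G"
    using assms(2,4) by (rule dominated_linear_graph_scaleR)
  then have "inverse (- t) * b - a \<le> p (inverse (- t) *\<^sub>R s - z)"
    using a by fastforce
  then have "- t * (inverse (- t) * b - a) \<le> - t * p (inverse (- t) *\<^sub>R s - z)"
    using less by (intro mult_left_mono) auto
  also have "\<dots> = p (- t *\<^sub>R (inverse (- t) *\<^sub>R s - z))"
    using sublinear_scaleR[OF assms(1), of "- t"] less by simp
  also have "- t *\<^sub>R (inverse (- t) *\<^sub>R s - z) = s + t *\<^sub>R z"
    using less by (simp add: scaleR_diff_right)
  finally show ?thesis using less by (simp add: algebra_simps)
qed

lemma dominated_linear_graph_extend: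
  assumes "sublinear p" "dominated_linear_graph p G" "z \<notin> Domain G"
    and a: "\<And>s b. (s, b) \<in> G \<Longrightarrow> b - p (s - z) \<le> a \<and> a \<le> p (s + z) - b"
  shows "dominated_linear_graph p {(s + t *\<^sub>R z, b + t * a) | s b t. (s, b) \<in> G}"
    (is "dominated_linear_graph p ?G'")
proof -
  note G = dominated_linear_graphD[OF assms(2)]
  have unique: "c = d" if xc: "(x, c) \<in> ?G'" and xd: "(x, d) \<in> ?G'" for x c d
  proof -
    obtain s b t s' b' t' where h: "(s, b) \<in> G" "(s', b') \<in> G"
      "x = s + t *\<^sub>R z" "c = b + t * a" "x = s' + t' *\<^sub>R z" "d = b' + t' * a"
      using xc xd by blast
    have "(s' + (-1) *\<^sub>R s, b' + (-1) * b) \<in> G" using h(1,2) G(2,3) by blast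
    then have diff: "(s' - s, b' - b) \<in> G" by simp
    have "t = t'"
    proof (rule ccontr)
      assume "t \<noteq> t'"
      moreover have "s' - s = (t - t') *\<^sub>R z"
        using h(3,5) by (simp add: algebra_simps)
      ultimately have "(1 / (t - t')) *\<^sub>R (s' - s) = z" by simp
      then show False using G(3)[OF diff] \<open>z \<notin> Domain G\<close> by (metis Domain.DomainI)
    qed
    then show ?thesis using h G(1) by auto
  qed
  have add: "(x + y, c + d) \<in> ?G'" if xc: "(x, c) \<in> ?G'" and yd: "(y, d) \<in> ?G'" for x c y d
  proof -
    obtain s b t s' b' t' where h: "(s, b) \<in> G" "(s', b') \<in> G"
      "x = s + t *\<^sub>R z" "c = b + t * a" "y = s' + t' *\<^sub>R z" "d = b' + t' * a"
      using xc yd by blast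
    have "(x + y, c + d) = ((s + s') + (t + t') *\<^sub>R z, (b + b') + (t + t') * a)"
      using h by (simp add: algebra_simps)
    then show ?thesis using G(2)[OF h(1,2)] by blast
  qed
  have scale: "(r *\<^sub>R x, r * c) \<in> ?G'" if xc: "(x, c) \<in> ?G'" for x c r
  proof -
    obtain s b t where h: "(s, b) \<in> G" "x = s + t *\<^sub>R z" "c = b + t * a"
      using xc by blast
    have "(r *\<^sub>R x, r * c) = (r *\<^sub>R s + (r * t) *\<^sub>R z, r * b + (r * t) * a)"
      using h by (simp add: algebra_simps)
    then show ?thesis using G(3)[OF h(1)] by blast
  qed
  have le: "c \<le> p x" if "(x, c) \<in> ?G'" for x c
    using that dominated_extension_le[OF assms(1,2) a] by blast
  show ?thesis
    unfolding dominated_linear_graph_def single_valued_def using unique add scale le by blast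
qed

theorem hahn_banach_sublinear:
  assumes "sublinear p"
  shows "\<exists>\<phi>. linear \<phi> \<and> (\<forall>x. \<phi> x \<le> p x) \<and> \<phi> x0 = p x0"
proof -
  define A where "A = {G. dominated_linear_graph p G \<and> (x0, p x0) \<in> G}"
  have zero_graph: "dominated_linear_graph p {(0, 0)}"
    using sublinear_zero[OF assms] by (simp add: dominated_linear_graph_def single_valued_def)
  have "A \<noteq> {}"
  proof (cases "x0 = 0")
    case True
    then show ?thesis using zero_graph sublinear_zero[OF assms] by (auto simp: A_def)
  next
    case False
    let ?G0 = "{(s + t *\<^sub>R x0, b + t * p x0) | s b t. (s, b) \<in> {(0::'a, 0::real)}}"
    have "dominated_linear_graph p ?G0"
      using False sublinear_uminus_ge[OF assms, of x0]
      by (intro dominated_linear_graph_extend[OF assms zero_graph]) auto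
    moreover have "(x0, p x0) \<in> ?G0"
      by (auto intro!: exI[of _ 1])
    ultimately show ?thesis unfolding A_def by blast
  qed
  moreover have "\<exists>U\<in>A. \<forall>G\<in>C. G \<subseteq> U" if "C \<in> chains A" for C
  proof (cases "C = {}")
    case False
    with that have "\<Union>C \<in> A"
      by (auto simp: A_def chains_def intro!: dominated_linear_graph_Union_chain)
    then show ?thesis by blast
  qed (use \<open>A \<noteq> {}\<close> in blast)
  ultimately obtain M where "M \<in> A" and maximal: "\<And>G. G \<in> A \<Longrightarrow> M \<subseteq> G \<Longrightarrow> G = M"
    using Zorn_Lemma2[of A] by blast
  then have M: "dominated_linear_graph p M" "(x0, p x0) \<in> M" by (auto simp: A_def)
  have total: "z \<in> Domain M" for z
  proof (rule ccontr)
    assume z: "z \<notin> Domain M"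
    obtain a where a: "\<And>s b. (s, b) \<in> M \<Longrightarrow> b - p (s - z) \<le> a \<and> a \<le> p (s + z) - b"
      using dominated_extension_value_exists[OF assms M(1)] M(2) by blast
    define G where "G = {(s + t *\<^sub>R z, b + t * a) | s b t. (s, b) \<in> M}"
    have "M \<subseteq> G" unfolding G_def by (force intro: exI[of _ 0])
    moreover have "G \<in> A"
      using dominated_linear_graph_extend[OF assms M(1) z a] M(2) \<open>M \<subseteq> G\<close>
      unfolding A_def G_def by blast
    moreover have "(z, a) \<in> G"
      using dominated_linear_graph_scaleR[OF M(1) M(2), of 0] unfolding G_def
      by (force intro: exI[of _ 1])
    ultimately show False using maximal z by blast
  qed
  define \<phi> where "\<phi> x = (SOME a. (x, a) \<in> M)" for x
  have graph: "(x, \<phi> x) \<in> M" for x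
    unfolding \<phi>_def using total[of x] by (auto intro: someI)
  have \<phi>_eq: "(x, a) \<in> M \<Longrightarrow> \<phi> x = a" for x a
    using dominated_linear_graph_unique[OF M(1) graph] .
  have "linear \<phi>"
    by (rule linearI)
      (auto intro!: \<phi>_eq dominated_linear_graph_add[OF M(1)] dominated_linear_graph_scaleR[OF M(1)] graph)
  then show ?thesis
    using dominated_linear_graph_le[OF M(1) graph] \<phi>_eq[OF M(2)] by blast
qed

section \<open>Norming functionals\<close>

lemma infdist_greatest: "A \<noteq> {} \<Longrightarrow> (\<And>a. a \<in> A \<Longrightarrow> c \<le> dist x a) \<Longrightarrow> c \<le> infdist x A"
  by (simp add: infdist_notempty cINF_greatest)

lemma infdist_subspace_add_le:
  fixes x z :: "'a::real_normed_vector"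
  assumes "subspace N"
  shows "infdist (x + z) N \<le> infdist x N + infdist z N"
proof -
  have N: "N \<noteq> {}" using subspace_0[OF assms] by blast
  have "infdist (x + z) N - infdist x N \<le> dist z n2" if "n2 \<in> N" for n2
  proof -
    have "infdist (x + z) N - dist z n2 \<le> dist x n1" if "n1 \<in> N" for n1
    proof -
      have "infdist (x + z) N \<le> dist (x + z) (n1 + n2)"
        using subspace_add[OF assms that \<open>n2 \<in> N\<close>] by (rule infdist_le)
      also have "\<dots> \<le> dist x n1 + dist z n2" by (rule dist_triangle_add)
      finally show ?thesis by simp
    qed
    then have "infdist (x + z) N - dist z n2 \<le> infdist x N" by (rule infdist_greatest[OF N])
    then show ?thesis by simp
  qed
  then have "infdist (x + z) N - infdist x N \<le> infdist z N" by (rule infdist_greatest[OF N])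
  then show ?thesis by simp
qed

lemma infdist_subspace_scaleR_le:
  fixes x :: "'a::real_normed_vector"
  assumes "subspace N" "0 < c"
  shows "infdist (c *\<^sub>R x) N \<le> c * infdist x N"
proof -
  have "infdist (c *\<^sub>R x) N / c \<le> dist x n" if "n \<in> N" for n
  proof -
    have "infdist (c *\<^sub>R x) N \<le> dist (c *\<^sub>R x) (c *\<^sub>R n)"
      using subspace_scale[OF assms(1) that] by (rule infdist_le)
    also have "\<dots> = c * dist x n"
      using assms(2) by (simp add: dist_norm flip: scaleR_diff_right)
    finally show ?thesis using assms(2) by (simp add: divide_le_eq mult.commute)
  qed
  then have "infdist (c *\<^sub>R x) N / c \<le> infdist x N"
    using subspace_0[OF assms(1)] by (intro infdist_greatest) auto
  then show ?thesis using assms(2) by (simp add: divide_le_eq mult.commute)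
qed

lemma sublinear_infdist_subspace:
  fixes N :: "'a::real_normed_vector set"
  assumes "subspace N"
  shows "sublinear (\<lambda>x. infdist x N)"
  unfolding sublinear_def
proof (intro conjI allI impI)
  fix c :: real and x assume "0 \<le> c"
  show "infdist (c *\<^sub>R x) N = c * infdist x N"
  proof (cases "c = 0")
    case False
    then have "0 < c" using \<open>0 \<le> c\<close> by simp
    have "infdist x N = infdist (inverse c *\<^sub>R (c *\<^sub>R x)) N" using False by simp
    also have "\<dots> \<le> inverse c * infdist (c *\<^sub>R x) N"
      using \<open>0 < c\<close> by (intro infdist_subspace_scaleR_le[OF assms]) simp
    finally have "c * infdist x N \<le> infdist (c *\<^sub>R x) N"
      using \<open>0 < c\<close> by (simp add: field_simps)
    then show ?thesis using infdist_subspace_scaleR_le[OF assms \<open>0 < c\<close>, of x] by simp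
  qed (simp add: subspace_0[OF assms])
qed (rule infdist_subspace_add_le[OF assms])

text \<open>Hahn--Banach applied to the distance to N, which vanishes on N and agrees with the
  norm at f precisely because f is a point of minimal norm in f + N.\<close>
lemma exists_norming_functional_vanishing:
  fixes f :: "'a::real_normed_vector"
  assumes "subspace N" and minimal: "\<And>n. n \<in> N \<Longrightarrow> norm f \<le> norm (f + n)"
  shows "\<exists>\<mu> :: 'a \<Rightarrow>\<^sub>L real.
    norm \<mu> \<le> 1 \<and> blinfun_apply \<mu> f = norm f \<and> (\<forall>n\<in>N. blinfun_apply \<mu> n = 0)"
proof -
  have N0: "0 \<in> N" by (rule subspace_0[OF assms(1)])
  have below_norm: "infdist x N \<le> norm x" for x
    using infdist_le[OF N0, of x] by simp
  have "norm f \<le> infdist f N"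
  proof (rule infdist_greatest)
    fix n assume "n \<in> N"
    then show "norm f \<le> dist f n"
      using minimal[of "- n"] subspace_neg[OF assms(1)] by (simp add: dist_norm)
  qed (use N0 in blast)
  then have at_f: "infdist f N = norm f" using below_norm[of f] by simp
  obtain \<phi> where \<phi>: "linear \<phi>" "\<And>x. \<phi> x \<le> infdist x N" "\<phi> f = infdist f N"
    using hahn_banach_sublinear[OF sublinear_infdist_subspace[OF assms(1)]] by blast
  have bound: "\<bar>\<phi> x\<bar> \<le> norm x" for x
    using \<phi>(2)[of x] \<phi>(2)[of "- x"] below_norm[of x] below_norm[of "- x"] linear_neg[OF \<phi>(1), of x]
    by auto
  have vanish: "\<phi> n = 0" if "n \<in> N" for n
  proof -
    have "\<phi> n \<le> 0" "\<phi> (- n) \<le> 0"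
      using \<phi>(2)[of n] \<phi>(2)[of "- n"] subspace_neg[OF assms(1) that] that by simp_all
    then show ?thesis using linear_neg[OF \<phi>(1), of n] by simp
  qed
  have "bounded_linear \<phi>"
    using \<phi>(1) bound by (intro bounded_linear_intro[where K = 1]) (auto simp: linear_add linear_scale)
  then show ?thesis
    using bound vanish \<phi>(3) at_f
    by (intro exI[of _ "Blinfun \<phi>"] conjI norm_blinfun_bound) (auto simp: bounded_linear_Blinfun_apply)
qed

corollary exists_norming_functional:
  "\<exists>\<mu> :: 'a::real_normed_vector \<Rightarrow>\<^sub>L real. norm \<mu> \<le> 1 \<and> blinfun_apply \<mu> x = norm x"
  using exists_norming_functional_vanishing[of "{0}" x] by auto

lemma linear_eq_sum_of_common_kernel:
  fixes \<phi> :: "'a::real_vector \<Rightarrow> real" and \<nu> :: "'i \<Rightarrow> 'a \<Rightarrow> real"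
  assumes "finite J" "linear \<phi>" "\<And>j. j \<in> J \<Longrightarrow> linear (\<nu> j)"
    and "\<And>x. \<forall>j\<in>J. \<nu> j x = 0 \<Longrightarrow> \<phi> x = 0"
  shows "\<exists>c. \<forall>x. \<phi> x = (\<Sum>j\<in>J. c j * \<nu> j x)"
  using assms
proof (induction J arbitrary: \<phi> rule: finite_induct)
  case empty
  then show ?case by simp
next
  case (insert k J)
  note \<phi> = insert.prems(1) and \<nu> = insert.prems(2) and kernel = insert.prems(3)
  have \<nu>J: "\<And>j. j \<in> J \<Longrightarrow> linear (\<nu> j)" and \<nu>k: "linear (\<nu> k)" using \<nu> by auto
  have sum_upd: "(\<Sum>j\<in>insert k J. (if j = k then d else c j) * \<nu> j x) = d * \<nu> k x + (\<Sum>j\<in>J. c j * \<nu> j x)"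
    for c d x
    using insert.hyps by simp (rule sum.cong; auto)
  show ?case
  proof (cases "\<forall>x. (\<forall>j\<in>J. \<nu> j x = 0) \<longrightarrow> \<nu> k x = 0")
    case True
    then have "\<phi> x = 0" if "\<forall>j\<in>J. \<nu> j x = 0" for x
      using that kernel by simp
    then obtain c where "\<forall>x. \<phi> x = (\<Sum>j\<in>J. c j * \<nu> j x)"
      using insert.IH[OF \<phi> \<nu>J] by blast
    then show ?thesis
      by (intro exI[of _ "c(k := 0)"]) (simp add: sum_upd)
  next
    case False
    then obtain x where x: "\<forall>j\<in>J. \<nu> j x = 0" "\<nu> k x \<noteq> 0" by blast
    define e where "e = inverse (\<nu> k x) *\<^sub>R x"
    have e: "\<forall>j\<in>J. \<nu> j e = 0" "\<nu> k e = 1"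
      using x \<nu> by (simp_all add: e_def linear_scale)
    define \<psi> where "\<psi> x = \<phi> x - \<phi> e * \<nu> k x" for x
    have "linear \<psi>"
      using \<phi> \<nu>k by (intro linearI) (simp_all add: \<psi>_def linear_add linear_scale algebra_simps)
    moreover have "\<psi> x = 0" if "\<forall>j\<in>J. \<nu> j x = 0" for x
    proof -
      have "\<phi> (x - \<nu> k x *\<^sub>R e) = 0"
        using that e \<nu> by (intro kernel) (simp add: linear_diff linear_scale)
      then show ?thesis using \<phi> by (simp add: \<psi>_def linear_diff linear_scale)
    qed
    ultimately obtain c where c: "\<forall>x. \<psi> x = (\<Sum>j\<in>J. c j * \<nu> j x)"
      using insert.IH[OF _ \<nu>J] by blast
    have \<phi>_eq: "\<phi> x = \<phi> e * \<nu> k x + (\<Sum>j\<in>J. c j * \<nu> j x)" for x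
      using c[rule_format, of x] by (simp add: \<psi>_def)
    show ?thesis
    proof (intro exI[of _ "c(k := \<phi> e)"] allI)
      show "\<phi> x = (\<Sum>j\<in>insert k J. (c(k := \<phi> e)) j * \<nu> j x)" for x
        unfolding fun_upd_apply sum_upd by (rule \<phi>_eq)
    qed
  qed
qed

section \<open>The Gateaux derivative of a smooth norm\<close>

lemma gateaux_norm_tendsto:
  fixes x :: "'b::real_normed_vector"
  assumes "smooth_space TYPE('b)" "x \<noteq> 0"
  shows "(norm_dq x h \<longlongrightarrow> gateaux_norm x h) (at 0)"
proof -
  obtain l where "(norm_dq x h \<longlongrightarrow> l) (at 0)"
    using assms unfolding smooth_space_def by blast
  moreover from this have "Lim (at 0) (norm_dq x h) = l" by (intro tendsto_Lim) simp_all
  ultimately show ?thesis using assms(2) by (simp add: gateaux_norm_def)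
qed

text \<open>Such an L is a subgradient of the norm at x, so it bounds the difference quotients from
  below for t > 0 and from above for t < 0.\<close>
lemma gateaux_norm_eq_norming_functional:
  fixes x :: "'b::real_normed_vector" and L :: "'b \<Rightarrow> real"
  assumes "smooth_space TYPE('b)" "x \<noteq> 0"
    and L: "linear L" "\<And>z. L z \<le> norm z" "L x = norm x"
  shows "gateaux_norm x h = L h"
proof -
  have lim_right: "(norm_dq x h \<longlongrightarrow> gateaux_norm x h) (at_right 0)"
    and lim_left: "(norm_dq x h \<longlongrightarrow> gateaux_norm x h) (at_left 0)"
    using gateaux_norm_tendsto[OF assms(1,2)] filterlim_at_split by blast+
  have subgradient: "t * L h \<le> norm (x + t *\<^sub>R h) - norm x" for t
    using L(2)[of "x + t *\<^sub>R h"] L(1,3) by (simp add: linear_add linear_scale)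
  have "\<forall>\<^sub>F t in at_right 0. L h \<le> norm_dq x h t"
    using eventually_at_right_less
  proof eventually_elim
    case (elim t)
    then show ?case
      using subgradient[of t] unfolding norm_dq_def by (simp add: pos_le_divide_eq mult.commute)
  qed
  then have "L h \<le> gateaux_norm x h"
    by (rule tendsto_lowerbound[OF lim_right]) simp
  have "\<forall>\<^sub>F t in at_left 0. t \<in> {- 1<..<0::real}"
    by (rule eventually_at_left_real) simp
  then have "\<forall>\<^sub>F t in at_left 0. norm_dq x h t \<le> L h"
  proof eventually_elim
    case (elim t)
    then have "t < 0" by simp
    then show ?case
      using subgradient[of t] unfolding norm_dq_def by (simp add: neg_divide_le_eq mult.commute)
  qed
  then have "gateaux_norm x h \<le> L h"
    by (rule tendsto_upperbound[OF lim_left]) simp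
  with \<open>L h \<le> gateaux_norm x h\<close> show ?thesis by simp
qed

lemma gateaux_norm_eq_blinfun:
  fixes x :: "'b::real_normed_vector"
  assumes "smooth_space TYPE('b)" "x \<noteq> 0"
  obtains \<mu> :: "'b \<Rightarrow>\<^sub>L real"
  where "norm \<mu> \<le> 1" "blinfun_apply \<mu> x = norm x" "gateaux_norm x = blinfun_apply \<mu>"
proof -
  obtain \<mu> :: "'b \<Rightarrow>\<^sub>L real" where \<mu>: "norm \<mu> \<le> 1" "blinfun_apply \<mu> x = norm x"
    using exists_norming_functional by blast
  have "blinfun_apply \<mu> z \<le> norm z" for z
    using abs_le_D1[OF norm_blinfun[of \<mu> z, unfolded real_norm_def]]
      mult_right_mono[OF \<mu>(1) norm_ge_zero, of z]
    by linarith
  then have "gateaux_norm x = blinfun_apply \<mu>"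
    using \<mu>(2) blinfun.bounded_linear_right
    by (intro ext gateaux_norm_eq_norming_functional[OF assms] bounded_linear.linear)
  with \<mu> show ?thesis by (rule that)
qed

section \<open>Minimum norm interpolation\<close>

lemma blinfun_sum_apply_interp_set:
  assumes "f \<in> interp_set \<nu> m y" "g \<in> interp_set \<nu> m y"
  shows "blinfun_apply (\<Sum>j=1..m. c j *\<^sub>R \<nu> j) g = blinfun_apply (\<Sum>j=1..m. c j *\<^sub>R \<nu> j) f"
  using assms by (auto simp: interp_set_def blinfun.sum_left blinfun.scaleR_left intro!: sum.cong)

lemma min_norm_interp_sol_imp_gateaux_representation:
  fixes \<nu> :: "nat \<Rightarrow> ('a::real_normed_vector \<Rightarrow>\<^sub>L real)"
  assumes smooth: "smooth_space TYPE('a \<Rightarrow>\<^sub>L real)" and sol: "min_norm_interp_sol \<nu> m y f"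
  shows "\<exists>c. \<forall>\<mu>. blinfun_apply \<mu> f =
    norm (\<Sum>j=1..m. c j *\<^sub>R \<nu> j) * gateaux_norm (\<Sum>j=1..m. c j *\<^sub>R \<nu> j) \<mu>"
proof (cases "f = 0")
  case True
  then show ?thesis by (intro exI[of _ "\<lambda>_. 0"]) (simp add: gateaux_norm_def)
next
  case False
  define N where "N = {n. \<forall>j\<in>{1..m}. blinfun_apply (\<nu> j) n = 0}"
  have "subspace N"
    by (auto simp: subspace_def N_def blinfun.add_right blinfun.scaleR_right)
  moreover have "norm f \<le> norm (f + n)" if "n \<in> N" for n
  proof -
    have "f + n \<in> interp_set \<nu> m y"
      using sol that by (simp add: min_norm_interp_sol_def interp_set_def N_def blinfun.add_right)
    then have "Inf (norm ` interp_set \<nu> m y) \<le> norm (f + n)"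
      by (intro cInf_lower bdd_belowI[of _ 0]) auto
    then show ?thesis using sol by (simp add: min_norm_interp_sol_def)
  qed
  ultimately obtain \<phi> :: "'a \<Rightarrow>\<^sub>L real"
    where \<phi>: "norm \<phi> \<le> 1" "blinfun_apply \<phi> f = norm f" "\<forall>n\<in>N. blinfun_apply \<phi> n = 0"
    using exists_norming_functional_vanishing by blast
  have lin: "linear (blinfun_apply \<mu>)" for \<mu> :: "'a \<Rightarrow>\<^sub>L real"
    by (rule bounded_linear.linear[OF blinfun.bounded_linear_right])
  have "blinfun_apply \<phi> x = 0" if "\<forall>j\<in>{1..m}. blinfun_apply (\<nu> j) x = 0" for x
    using \<phi>(3) that by (simp add: N_def)
  then obtain c where c: "\<forall>x. blinfun_apply \<phi> x = (\<Sum>j\<in>{1..m}. c j * blinfun_apply (\<nu> j) x)"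
    using linear_eq_sum_of_common_kernel[OF finite_atLeastAtMost lin lin] by blast
  define S where "S = (\<Sum>j=1..m. (norm f * c j) *\<^sub>R \<nu> j)"
  have S: "S = norm f *\<^sub>R \<phi>"
    by (rule blinfun_eqI) (simp add: S_def c blinfun.sum_left blinfun.scaleR_left sum_distrib_left mult.assoc)
  have "norm f \<le> norm \<phi> * norm f"
    using norm_blinfun[of \<phi> f] \<phi>(2) by simp
  then have norm_\<phi>: "norm \<phi> = 1" using \<phi>(1) False by simp
  then have norm_S: "norm S = norm f" by (simp add: S)
  have "gateaux_norm S \<mu> = blinfun_apply \<mu> f / norm f" for \<mu>
  proof (rule gateaux_norm_eq_norming_functional[OF smooth])
    show "S \<noteq> 0" using norm_S False by auto
    show "linear (\<lambda>\<mu>. blinfun_apply \<mu> f / norm f)"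
      by (intro linearI) (simp_all add: blinfun.add_left blinfun.scaleR_left add_divide_distrib)
    show "blinfun_apply \<mu>' f / norm f \<le> norm \<mu>'" for \<mu>' :: "'a \<Rightarrow>\<^sub>L real"
      using abs_le_D1[OF norm_blinfun[of \<mu>' f, unfolded real_norm_def]] False
      by (simp add: divide_le_eq)
    show "blinfun_apply S f / norm f = norm S"
      using False by (simp add: S norm_\<phi> \<phi>(2) blinfun.scaleR_left)
  qed
  then have "\<forall>\<mu>. blinfun_apply \<mu> f = norm S * gateaux_norm S \<mu>"
    using False norm_S by simp
  then show ?thesis unfolding S_def by (intro exI[of _ "\<lambda>j. norm f * c j"])
qed

lemma gateaux_representation_imp_min_norm_interp_sol:
  fixes S :: "'a::real_normed_vector \<Rightarrow>\<^sub>L real"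
  assumes smooth: "smooth_space TYPE('a \<Rightarrow>\<^sub>L real)"
    and f: "f \<in> interp_set \<nu> m y"
    and S_const: "\<And>g. g \<in> interp_set \<nu> m y \<Longrightarrow> blinfun_apply S g = blinfun_apply S f"
    and repr: "\<And>\<mu>. blinfun_apply \<mu> f = norm S * gateaux_norm S \<mu>"
  shows "min_norm_interp_sol \<nu> m y f"
proof -
  obtain \<mu>f :: "'a \<Rightarrow>\<^sub>L real" where \<mu>f: "norm \<mu>f \<le> 1" "blinfun_apply \<mu>f f = norm f"
    using exists_norming_functional by blast
  have "norm f \<le> norm g" if g: "g \<in> interp_set \<nu> m y" for g
  proof (cases "S = 0")
    case True
    then show ?thesis using repr[of \<mu>f] \<mu>f(2) by simp
  next
    case False
    then obtain \<mu>S :: "('a \<Rightarrow>\<^sub>L real) \<Rightarrow>\<^sub>L real"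
      where \<mu>S: "norm \<mu>S \<le> 1" "blinfun_apply \<mu>S S = norm S" "gateaux_norm S = blinfun_apply \<mu>S"
      using gateaux_norm_eq_blinfun[OF smooth] by blast
    have "norm f = norm S * blinfun_apply \<mu>S \<mu>f"
      using repr[of \<mu>f] \<mu>f(2) \<mu>S(3) by simp
    also have "\<dots> \<le> norm S * (norm \<mu>S * norm \<mu>f)"
      using abs_le_D1[OF norm_blinfun[of \<mu>S \<mu>f, unfolded real_norm_def]]
      by (intro mult_left_mono) simp_all
    also have "\<dots> \<le> norm S"
      using \<mu>S(1) \<mu>f(1) by (simp add: mult_le_one mult_left_le)
    finally have "norm f \<le> norm S" .
    have "norm S * norm S = blinfun_apply S g"
      using repr[of S] \<mu>S(2,3) S_const[OF g] by simp
    also have "\<dots> \<le> norm S * norm g"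
      using abs_le_D1[OF norm_blinfun[of S g, unfolded real_norm_def]] .
    finally have "norm S \<le> norm g" using False by simp
    with \<open>norm f \<le> norm S\<close> show ?thesis by simp
  qed
  then have "Inf (norm ` interp_set \<nu> m y) = norm f"
    using f by (intro cInf_eq_minimum) auto
  then show ?thesis using f by (simp add: min_norm_interp_sol_def)
qed

theorem mainTheorem6:
  fixes \<nu> :: "nat \<Rightarrow> ('a::banach \<Rightarrow>\<^sub>L real)" and m :: nat and y :: "nat \<Rightarrow> real" and f :: 'a
  assumes "smooth_space TYPE('a \<Rightarrow>\<^sub>L real)"
    and "lin_indep_family \<nu> m"
  shows "min_norm_interp_sol \<nu> m y f \<longleftrightarrow>
    (f \<in> interp_set \<nu> m y \<and>
     (\<exists>c :: nat \<Rightarrow> real.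
        \<forall>\<mu> :: 'a \<Rightarrow>\<^sub>L real.
          blinfun_apply \<mu> f =
            norm (\<Sum>j=1..m. c j *\<^sub>R \<nu> j) * gateaux_norm (\<Sum>j=1..m. c j *\<^sub>R \<nu> j) \<mu>))"
proof
  assume "min_norm_interp_sol \<nu> m y f"
  then show "f \<in> interp_set \<nu> m y \<and> (\<exists>c. \<forall>\<mu>. blinfun_apply \<mu> f =
      norm (\<Sum>j=1..m. c j *\<^sub>R \<nu> j) * gateaux_norm (\<Sum>j=1..m. c j *\<^sub>R \<nu> j) \<mu>)"
    using min_norm_interp_sol_imp_gateaux_representation[OF assms(1)]
    by (simp add: min_norm_interp_sol_def)
next
  assume "f \<in> interp_set \<nu> m y \<and> (\<exists>c. \<forall>\<mu>. blinfun_apply \<mu> f =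
      norm (\<Sum>j=1..m. c j *\<^sub>R \<nu> j) * gateaux_norm (\<Sum>j=1..m. c j *\<^sub>R \<nu> j) \<mu>)"
  then obtain c where f: "f \<in> interp_set \<nu> m y"
    and repr: "\<And>\<mu>. blinfun_apply \<mu> f =
      norm (\<Sum>j=1..m. c j *\<^sub>R \<nu> j) * gateaux_norm (\<Sum>j=1..m. c j *\<^sub>R \<nu> j) \<mu>"
    by blast
  show "min_norm_interp_sol \<nu> m y f"
    using gateaux_representation_imp_min_norm_interp_sol[OF assms(1) f
        blinfun_sum_apply_interp_set[OF f] repr] .
qed

end
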